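(* Let $n\ge2$ and let $\mathsf u$ be a subword of $\bm\lambda_n$ with $u_1\cdots u_{n(n-1)}=e$. If $(\!(a,b)\!)$ is a reflection appearing in $\textsc{inv}(\mathsf u)$, then $|b-a|\le n-1$.
   Context: $\widetilde S_n$ is the group, under composition, of bijections $w:\mathbb Z\to\mathbb Z$ with $w(i+n)=w(i)+n$ and $\sum_{i=1}^n w(i)=\binom{n+1}2$. For $i\not\equiv j\pmod n$, $(\!(i,j)\!)$ is the reflection swapping $i+kn$ and $j+kn$ for all $k$; $(\!(i,j)\!)=(\!(j,i)\!)=(\!(i+kn,j+kn)\!)$, so $|j-i|$ depends only on the reflection. $s_i=(\!(i,i+1)\!)$ for $i\in\{0,\dots,n-1\}$. $\bm\lambda_n$ is the word $[s_0,\dots,s_{n-1}]$ repeated $n-1$ times with $j$-th letter $\sigma_j=s_{(j-1)\bmod n}$ (index in $\{0,\dots,n-1\}$). A subword is $\mathsf u=[u_1,\dots,u_{n(n-1)}]$ with $u_j\in\{\sigma_j,e\}$. Write $u_{(j)}=u_1\cdots u_j$ with $u_{(0)}=e$. $\textsc{inv}(\mathsf u)=[t_1,\dots,t_{n(n-1)}]$ with $t_j=u_{(j-1)}\sigma_j u_{(j-1)}^{-1}$. *)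

theory Defs
  imports Main
begin

text \<open>Elements of the affine symmetric group are represented as bijections int => int;
  the group operation is function composition.\<close>

text \<open>The reflection ((i,j)) of the affine symmetric group (meaningful when i, j are not
  congruent mod n): it swaps i + k n and j + k n for all integers k and fixes all other integers.\<close>
definition arefl :: "nat \<Rightarrow> int \<Rightarrow> int \<Rightarrow> (int \<Rightarrow> int)" where
  "arefl n i j = (\<lambda>x. if x mod int n = i mod int n then x + (j - i)
                      else if x mod int n = j mod int n then x + (i - j)
                      else x)"

definition asimple :: "nat \<Rightarrow> int \<Rightarrow> (int \<Rightarrow> int)" where
  "asimple n i = arefl n i (i + 1)"

text \<open>The j-th letter (j >= 1) of the word lambda_n: sigma_j = s_{(j-1) mod n}.\<close>
definition lam_letter :: "nat \<Rightarrow> nat \<Rightarrow> (int \<Rightarrow> int)" where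
  "lam_letter n j = asimple n ((int j - 1) mod int n)"

definition is_subword_lam :: "nat \<Rightarrow> (int \<Rightarrow> int) list \<Rightarrow> bool" where
  "is_subword_lam n u \<longleftrightarrow> length u = n * (n - 1) \<and>
     (\<forall>j < length u. u ! j = lam_letter n (Suc j) \<or> u ! j = id)"

definition uprefix :: "(int \<Rightarrow> int) list \<Rightarrow> nat \<Rightarrow> (int \<Rightarrow> int)" where
  "uprefix u j = foldr (\<circ>) (take j u) id"

definition inv_entry :: "nat \<Rightarrow> (int \<Rightarrow> int) list \<Rightarrow> nat \<Rightarrow> (int \<Rightarrow> int)" where
  "inv_entry n u j = uprefix u (j - 1) \<circ> lam_letter n j \<circ> inv (uprefix u (j - 1))"

end

theory Submission
  imports Defs
begin

text \<open>
  Let W = u_(j-1). As \<sigma>_j swaps j - 1 and j, the entry t_j = W \<sigma>_j W^-1 is the reflection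
  swapping A = W(j - 1) and B = W(j); hence |b - a| = |B - A| and B - A \<noteq> \<plusminus>n.

  Follow a point x along the word by x_s = u_(s)^-1(x): at time s it is fixed or moved by
  \<sigma>_(s+1), which swaps the residues s and s + 1 mod n. In terms of the phase (s - x_s) mod n,
  the point moves up only at phase 0 (and stays at phase 0), moves down only at phase n - 1
  (and restarts at phase 1), and otherwise its phase advances by one; so it descends at most
  once every n - 1 letters. The walks of A and B are closed, as u_(N) = e for N = n(n - 1), and
  at time j - 1 they sit at j - 1 and j. Counting their descents before and after that time
  gives B - A \<le> n and A - B \<le> n - 1.
\<close>

definition lam_step :: "nat \<Rightarrow> nat \<Rightarrow> int \<Rightarrow> int \<Rightarrow> bool" where
  "lam_step n s x y \<longleftrightarrow> y = x \<or> y = lam_letter n (Suc s) x"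

lemma lam_letter_Suc_apply:
  "lam_letter n (Suc s) x =
     (if x mod int n = int s mod int n then x + 1
      else if x mod int n = (int s + 1) mod int n then x - 1 else x)"
  by (simp add: lam_letter_def asimple_def arefl_def mod_add_left_eq)

lemma lam_step_phase_cases:
  fixes n s :: nat and x y r r' :: int
  assumes n: "n \<ge> 2" and step: "lam_step n s x y"
    and phase: "r = (int s - x) mod int n" and phase': "r' = (int (Suc s) - y) mod int n"
  obtains (stay) "y = x" "r' = (if r = int n - 1 then 0 else r + 1)"
    | (ride) "y = x + 1" "r = 0" "r' = 0"
    | (jump) "y = x - 1" "r = int n - 1" "r' = 1"
proof -
  have r: "0 \<le> r" "r < int n" using n by (simp_all add: phase)
  consider "y = x" | "x mod int n = int s mod int n" "y = x + 1"
    | "x mod int n = (int s + 1) mod int n" "y = x - 1"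
    using step unfolding lam_step_def lam_letter_Suc_apply by (auto split: if_splits)
  then show thesis
  proof cases
    case 1
    have "r' = (1 + (int s - x)) mod int n" unfolding phase' 1 by (simp add: algebra_simps)
    then have "r' = (r + 1) mod int n" by (simp add: phase mod_add_right_eq add.commute)
    then have "r' = (if r = int n - 1 then 0 else r + 1)" using r by auto
    with 1 show thesis by (rule stay)
  next
    case 2
    then have "r = 0" unfolding phase by (simp add: mod_eq_dvd_iff mod_eq_0_iff_dvd dvd_diff_commute)
    moreover have "r' = r" unfolding phase phase' \<open>y = x + 1\<close> by simp
    ultimately show thesis using 2 ride by simp
  next
    case 3
    then have "int n dvd int s + 1 - x" by (simp add: mod_eq_dvd_iff dvd_diff_commute)
    then have "(int s - x) mod int n = (- 1) mod int n" "r' = 1 mod int n"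
      unfolding phase' \<open>y = x - 1\<close> by (simp_all add: mod_eq_dvd_iff algebra_simps)
    then have "r = int n - 1" "r' = 1" using n by (simp_all add: phase zmod_minus1)
    with 3 show thesis using jump by simp
  qed
qed

text \<open>
  At phase r \<noteq> 0 a walk has spent r - 1 letters since its last descent, which left it at
  phase 1: \<open>fwd_slack\<close> counts the letters still owed to that descent, \<open>bwd_slack\<close> those
  already spent.
\<close>

definition fwd_slack :: "nat \<Rightarrow> int \<Rightarrow> int" where
  "fwd_slack n r = (if r = 0 then 0 else int n - 1 - r)"

definition bwd_slack :: "int \<Rightarrow> int" where
  "bwd_slack r = (if r = 0 then 0 else r - 1)"

lemma fwd_slack_step:
  assumes n: "n \<ge> 2" and step: "lam_step n s x y"
    and "(int n - 1) * (p - x) \<le> int s + fwd_slack n ((int s - x) mod int n)"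
  shows "(int n - 1) * (p - y) \<le> int (Suc s) + fwd_slack n ((int (Suc s) - y) mod int n)"
proof -
  define r where "r = (int s - x) mod int n"
  define r' where "r' = (int (Suc s) - y) mod int n"
  have r: "0 \<le> r" "r < int n" using n by (simp_all add: r_def)
  have bound: "(int n - 1) * (p - x) \<le> int s + fwd_slack n r" using assms(3) by (simp add: r_def)
  have "(int n - 1) * (p - y) \<le> int (Suc s) + fwd_slack n r'"
  proof (cases rule: lam_step_phase_cases[OF n step r_def r'_def, case_names stay ride jump])
    case stay
    then have "fwd_slack n r \<le> 1 + fwd_slack n r'" using r by (auto simp: fwd_slack_def)
    then show ?thesis using bound stay by simp
  next
    case ride
    have "(int n - 1) * (p - y) = (int n - 1) * (p - x) - (int n - 1)"
      using ride by (simp add: algebra_simps)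
    then show ?thesis using bound ride n by (simp add: fwd_slack_def)
  next
    case jump
    have "(int n - 1) * (p - y) = (int n - 1) * (p - x) + (int n - 1)"
      unfolding \<open>y = x - 1\<close> by (simp add: algebra_simps)
    then show ?thesis using bound jump n by (simp add: fwd_slack_def)
  qed
  then show ?thesis by (simp add: r'_def)
qed

lemma bwd_slack_step:
  assumes n: "n \<ge> 2" and step: "lam_step n s x y"
    and "(int n - 1) * (y - p) \<le> K - int (Suc s) + bwd_slack ((int (Suc s) - y) mod int n)"
  shows "(int n - 1) * (x - p) \<le> K - int s + bwd_slack ((int s - x) mod int n)"
proof -
  define r where "r = (int s - x) mod int n"
  define r' where "r' = (int (Suc s) - y) mod int n"
  have r: "0 \<le> r" "r < int n" using n by (simp_all add: r_def)
  have bound: "(int n - 1) * (y - p) \<le> K - int (Suc s) + bwd_slack r'"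
    using assms(3) by (simp add: r'_def)
  have "(int n - 1) * (x - p) \<le> K - int s + bwd_slack r"
  proof (cases rule: lam_step_phase_cases[OF n step r_def r'_def, case_names stay ride jump])
    case stay
    then have "bwd_slack r' \<le> bwd_slack r + 1" using r by (auto simp: bwd_slack_def)
    then show ?thesis using bound stay by simp
  next
    case ride
    have "(int n - 1) * (y - p) = (int n - 1) * (x - p) + (int n - 1)"
      using ride by (simp add: algebra_simps)
    then show ?thesis using bound ride n by (simp add: bwd_slack_def)
  next
    case jump
    have "(int n - 1) * (y - p) = (int n - 1) * (x - p) - (int n - 1)"
      unfolding \<open>y = x - 1\<close> by (simp add: algebra_simps)
    then show ?thesis using bound jump n by (simp add: bwd_slack_def)
  qed
  then show ?thesis by (simp add: r_def)
qed

lemma lam_walk_descent_fwd: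
  fixes P :: "nat \<Rightarrow> int"
  assumes n: "n \<ge> 2" and walk: "\<And>s. s < l \<Longrightarrow> lam_step n s (P s) (P (Suc s))"
  shows "(int n - 1) * (P 0 - P l) \<le> int l + fwd_slack n ((int l - P l) mod int n)"
  using walk
proof (induction l)
  case 0
  show ?case using n by (simp add: fwd_slack_def)
next
  case (Suc l)
  then have "(int n - 1) * (P 0 - P l) \<le> int l + fwd_slack n ((int l - P l) mod int n)"
    by simp
  from fwd_slack_step[OF n Suc.prems[OF lessI] this] show ?case by simp
qed

lemma lam_walk_descent_bwd:
  fixes P :: "nat \<Rightarrow> int"
  assumes n: "n \<ge> 2" and walk: "\<And>s. s < N \<Longrightarrow> lam_step n s (P s) (P (Suc s))"
    and "s \<le> N"
  shows "(int n - 1) * (P s - P N) \<le> int N - int s + bwd_slack ((int s - P s) mod int n)"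
  using \<open>s \<le> N\<close>
proof (induction s rule: inc_induct)
  case base
  have "0 \<le> (int N - P N) mod int n" using n by simp
  then show ?case by (auto simp: bwd_slack_def)
next
  case (step s)
  then show ?case using bwd_slack_step[OF n walk[OF \<open>s < N\<close>]] by simp
qed

lemma lam_walks_adjacent_gap:
  fixes P Q :: "nat \<Rightarrow> int"
  assumes n: "n \<ge> 2" and N: "N = n * (n - 1)" and t: "t < N"
    and walk_P: "\<And>s. s < N \<Longrightarrow> lam_step n s (P s) (P (Suc s))"
    and closed_P: "P N = P 0" and P_t: "P t = int t"
    and walk_Q: "\<And>s. s < N \<Longrightarrow> lam_step n s (Q s) (Q (Suc s))"
    and closed_Q: "Q N = Q 0" and Q_t: "Q t = int t + 1"
  shows "Q 0 - P 0 \<le> int n" and "P 0 - Q 0 \<le> int n - 1"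
proof -
  have NN: "int N = (int n - 1) * int n" using n by (simp add: N of_nat_diff algebra_simps)
  have minus_one: "(- 1) mod int n = int n - 1" using n by (simp add: zmod_minus1)
  have P_fwd: "(int n - 1) * (P 0 - int t) \<le> int t"
    using lam_walk_descent_fwd[OF n walk_P, of t] t P_t by (simp add: fwd_slack_def)
  have Q_fwd: "(int n - 1) * (Q 0 - (int t + 1)) \<le> int t"
    using lam_walk_descent_fwd[OF n walk_Q, of t] t Q_t minus_one n by (simp add: fwd_slack_def)
  have Q_bwd: "(int n - 1) * (int t + 1 - Q 0) \<le> int N - int t + (int n - 2)"
    using lam_walk_descent_bwd[OF n walk_Q, where s = t and N = N] t Q_t closed_Q minus_one n
    by (simp add: bwd_slack_def)
  have P_bwd: "(int n - 1) * (int t - P 0) \<le> int N - int t - 1"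
  proof -
    \<comment> \<open>From phase 0 the walk cannot descend, and it lands at phase 0 or 1, where
      \<open>bwd_slack\<close> vanishes; starting the backward count at t itself would lose a letter.\<close>
    obtain up: "int t \<le> P (Suc t)"
      and slack: "bwd_slack ((int (Suc t) - P (Suc t)) mod int n) = 0"
      by (cases rule: lam_step_phase_cases[OF n walk_P[OF t] refl refl])
        (use P_t n in \<open>auto simp: bwd_slack_def\<close>)
    have "(int n - 1) * (int t - P 0) \<le> (int n - 1) * (P (Suc t) - P 0)"
      using up n by (intro mult_left_mono) auto
    also have "\<dots> \<le> int N - int (Suc t)"
      using lam_walk_descent_bwd[OF n walk_P, where s = "Suc t" and N = N] t closed_P slack
      by simp
    finally show ?thesis by simp
  qed
  have "(int n - 1) * (Q 0 - P 0 - 1) < (int n - 1) * int n"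
    using P_bwd Q_fwd NN by (simp add: algebra_simps)
  then show "Q 0 - P 0 \<le> int n" using n by (simp add: mult_less_cancel_left_pos)
  have "(int n - 1) * (P 0 - Q 0 + 1) < (int n - 1) * (int n + 1)"
    using P_fwd Q_bwd NN by (simp add: algebra_simps)
  then show "P 0 - Q 0 \<le> int n - 1" using n by (simp add: mult_less_cancel_left_pos)
qed

lemma lam_letter_Suc_involutive:
  assumes "n \<ge> 2"
  shows "lam_letter n (Suc s) \<circ> lam_letter n (Suc s) = id"
proof
  fix x
  let ?\<sigma> = "lam_letter n (Suc s)" and ?m = "int n"
  have distinct: "int s mod ?m \<noteq> (int s + 1) mod ?m"
  proof
    assume "int s mod ?m = (int s + 1) mod ?m"
    then have "?m dvd 1" by (simp add: mod_eq_dvd_iff dvd_diff_commute)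
    with assms show False by simp
  qed
  consider "x mod ?m = int s mod ?m" | "x mod ?m = (int s + 1) mod ?m"
    | "x mod ?m \<noteq> int s mod ?m" "x mod ?m \<noteq> (int s + 1) mod ?m"
    by blast
  then show "(?\<sigma> \<circ> ?\<sigma>) x = id x"
  proof cases
    case 1
    then have "(x + 1) mod ?m = (int s + 1) mod ?m" by (metis mod_add_left_eq)
    then show ?thesis using 1 distinct by (simp add: lam_letter_Suc_apply)
  next
    case 2
    then have "(x - 1) mod ?m = int s mod ?m" by (metis mod_diff_left_eq add_diff_cancel_right')
    then show ?thesis using 2 distinct by (simp add: lam_letter_Suc_apply)
  next
    case 3
    then show ?thesis by (simp add: lam_letter_Suc_apply)
  qed
qed

lemma subword_lam_letter:
  assumes "is_subword_lam n u" and "k < length u"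
  shows "u ! k = lam_letter n (Suc k) \<or> u ! k = id"
  using assms by (simp add: is_subword_lam_def)

lemma subword_lam_letter_involutive:
  assumes "is_subword_lam n u" and "n \<ge> 2" and "k < length u"
  shows "u ! k \<circ> u ! k = id"
  using subword_lam_letter[OF assms(1,3)] lam_letter_Suc_involutive[OF assms(2)] by auto

lemma uprefix_Suc:
  assumes "t < length u"
  shows "uprefix u (Suc t) = uprefix u t \<circ> u ! t"
proof -
  have foldr_comp: "foldr (\<circ>) fs g = foldr (\<circ>) fs id \<circ> g" for fs and g :: "int \<Rightarrow> int"
    by (induction fs) auto
  show ?thesis
    using assms foldr_comp[of "take t u" "u ! t"]
    by (simp add: uprefix_def take_Suc_conv_app_nth)
qed

lemma bij_uprefix:
  assumes "is_subword_lam n u" and "n \<ge> 2"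
  shows "bij (uprefix u t)"
proof -
  have "bij (foldr (\<circ>) fs id)" if "\<forall>f \<in> set fs. bij f" for fs :: "(int \<Rightarrow> int) list"
    using that by (induction fs) (auto intro: bij_comp)
  moreover have "bij f" if "f \<in> set u" for f
    using that subword_lam_letter_involutive[OF assms] o_bij
    by (metis in_set_conv_nth)
  ultimately show ?thesis
    unfolding uprefix_def by (meson in_set_takeD)
qed

lemma inv_uprefix_Suc:
  assumes "is_subword_lam n u" and "n \<ge> 2" and "t < length u"
  shows "inv (uprefix u (Suc t)) = u ! t \<circ> inv (uprefix u t)"
proof -
  have invol: "u ! t \<circ> u ! t = id" by (rule subword_lam_letter_involutive[OF assms])
  then have "inv (u ! t) = u ! t" by (rule inv_unique_comp[OF _ invol])
  then show ?thesis
    using uprefix_Suc[OF assms(3)]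
      o_inv_distrib[OF bij_uprefix[OF assms(1,2)] o_bij[OF invol invol]]
    by simp
qed

lemma subword_walk_lam_step:
  assumes "is_subword_lam n u" and "n \<ge> 2" and "s < length u"
  shows "lam_step n s (inv (uprefix u s) x) (inv (uprefix u (Suc s)) x)"
  using subword_lam_letter[OF assms(1,3)] inv_uprefix_Suc[OF assms]
  by (auto simp: lam_step_def)

lemma inv_entry_Suc_apply:
  assumes "is_subword_lam n u" and "n \<ge> 2"
  shows "inv_entry n u (Suc t) (uprefix u t (int t)) = uprefix u t (int t + 1)"
proof -
  have "inv (uprefix u t) (uprefix u t (int t)) = int t"
    using bij_uprefix[OF assms] by (simp add: bij_is_inj)
  then show ?thesis by (simp add: inv_entry_def lam_letter_Suc_apply)
qed

lemma arefl_moved_by: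
  assumes "arefl n a b x \<noteq> x"
  shows "arefl n a b x - x \<in> {b - a, a - b}"
  using assms by (auto simp: arefl_def split: if_splits)

lemma closed_subword_adjacent_gap:
  assumes n: "n \<ge> 2" and u: "is_subword_lam n u" and closed: "uprefix u (n * (n - 1)) = id"
    and t: "t < n * (n - 1)"
  shows "uprefix u t (int t + 1) - uprefix u t (int t) \<le> int n"
    and "uprefix u t (int t) - uprefix u t (int t + 1) \<le> int n - 1"
proof -
  define N where "N = n * (n - 1)"
  define walk where "walk x s = inv (uprefix u s) x" for x s
  have "length u = N" using u by (simp add: is_subword_lam_def N_def)
  then have steps: "lam_step n s (walk x s) (walk x (Suc s))" if "s < N" for x s
    unfolding walk_def using subword_walk_lam_step[OF u n] that by simp
  have closed_walk: "walk x N = walk x 0" for x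
    using closed by (simp add: walk_def N_def uprefix_def)
  have "walk (uprefix u t (int t)) t = int t" "walk (uprefix u t (int t + 1)) t = int t + 1"
    using bij_uprefix[OF u n] by (simp_all add: walk_def bij_is_inj)
  from lam_walks_adjacent_gap[OF n N_def t[folded N_def] steps closed_walk this(1)
      steps closed_walk this(2)]
  show "uprefix u t (int t + 1) - uprefix u t (int t) \<le> int n"
    and "uprefix u t (int t) - uprefix u t (int t + 1) \<le> int n - 1"
    by (simp_all add: walk_def uprefix_def)
qed

theorem lemma5p13:
  fixes n :: nat and u :: "(int \<Rightarrow> int) list" and a b :: int and j :: nat
  assumes "n \<ge> 2"
    and "is_subword_lam n u"
    and "uprefix u (n * (n - 1)) = id"
    and "a mod int n \<noteq> b mod int n"
    and "1 \<le> j" and "j \<le> n * (n - 1)"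
    and "inv_entry n u j = arefl n a b"
  shows "\<bar>b - a\<bar> \<le> int n - 1"
proof -
  obtain t where j: "j = Suc t" and t: "t < n * (n - 1)" using assms(5,6) by (cases j) auto
  define A where "A = uprefix u t (int t)"
  define B where "B = uprefix u t (int t + 1)"
  have gap: "B - A \<le> int n" "A - B \<le> int n - 1"
    using closed_subword_adjacent_gap[OF assms(1-3) t] by (simp_all add: A_def B_def)
  have "arefl n a b A = B"
    using inv_entry_Suc_apply[OF assms(2,1), of t] assms(7) by (simp add: j A_def B_def)
  moreover have "B \<noteq> A"
    using bij_uprefix[OF assms(2,1)] by (simp add: A_def B_def bij_is_inj inj_eq)
  ultimately have moved: "B - A \<in> {b - a, a - b}"
    using arefl_moved_by[of n a b A] by simp
  have "b \<noteq> a + int n" "a \<noteq> b + int n" using assms(4) by auto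
  with moved have "B - A \<noteq> int n" by auto
  from moved consider "B - A = b - a" | "B - A = a - b" by blast
  then show ?thesis unfolding abs_le_iff using gap \<open>B - A \<noteq> int n\<close> by cases linarith+
qed

end
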